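(* For every $s\in I(\Phi)$ there exists a Weyl chamber $C$ of $\Phi$ which is an S-chamber for $s$, i.e. such that $s(\alpha)\in\Phi^+(C)$ for every $\alpha\in\Phi^+(C)\cap\Phi^s_\star$. Equivalently, $s(\alpha)\in\Phi^+(C)$ for every $\alpha\in\mathcal B(C)\cap\Phi^s_\star$.
   Context: $\Phi$ is a reduced crystallographic root system spanning a real Euclidean space $V$ with inner product $(\cdot|\cdot)$; $A(\Phi)$ is the group of orthogonal maps of $V$ preserving $\Phi$, $I(\Phi)$ its involutions. For $s\in I(\Phi)$: $\Phi^s_\circ=\{\alpha:s\alpha=\alpha\}$, $\Phi^s_\bullet=\{\alpha:s\alpha=-\alpha\}$, $\Phi^s_\star=\Phi\setminus(\Phi^s_\circ\cup\Phi^s_\bullet)$. A Weyl chamber is a connected component $C$ of $\{v\in V:(\alpha|v)\ne0\ \forall\alpha\in\Phi\}$; $\Phi^+(C)=\{\alpha:(\alpha|v)>0\ \forall v\in C\}$ and $\mathcal B(C)$ is the corresponding basis of simple roots. *)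

theory Defs
  imports "HOL-Analysis.Analysis"
begin

definition refl_vec :: "'a::euclidean_space \<Rightarrow> 'a \<Rightarrow> 'a" where
  "refl_vec \<alpha> v = v - (2 * (v \<bullet> \<alpha>) / (\<alpha> \<bullet> \<alpha>)) *\<^sub>R \<alpha>"

definition reduced_root_system :: "'a::euclidean_space set \<Rightarrow> bool" where
  "reduced_root_system \<Phi> \<longleftrightarrow>
     finite \<Phi> \<and> 0 \<notin> \<Phi> \<and> span \<Phi> = UNIV \<and>
     (\<forall>\<alpha>\<in>\<Phi>. \<forall>\<beta>\<in>\<Phi>. refl_vec \<alpha> \<beta> \<in> \<Phi>) \<and>
     (\<forall>\<alpha>\<in>\<Phi>. \<forall>\<beta>\<in>\<Phi>. 2 * (\<beta> \<bullet> \<alpha>) / (\<alpha> \<bullet> \<alpha>) \<in> \<int>) \<and>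
     (\<forall>\<alpha>\<in>\<Phi>. \<forall>c::real. c *\<^sub>R \<alpha> \<in> \<Phi> \<longrightarrow> c = 1 \<or> c = -1)"

definition root_automorphisms :: "'a::euclidean_space set \<Rightarrow> ('a \<Rightarrow> 'a) set" where
  "root_automorphisms \<Phi> = {f. orthogonal_transformation f \<and> f ` \<Phi> = \<Phi>}"

definition root_involutions :: "'a::euclidean_space set \<Rightarrow> ('a \<Rightarrow> 'a) set" where
  "root_involutions \<Phi> = {s \<in> root_automorphisms \<Phi>. s \<circ> s = id}"

definition fixed_roots :: "'a::euclidean_space set \<Rightarrow> ('a \<Rightarrow> 'a) \<Rightarrow> 'a set" where
  "fixed_roots \<Phi> s = {\<alpha> \<in> \<Phi>. s \<alpha> = \<alpha>}"

definition neg_roots :: "'a::euclidean_space set \<Rightarrow> ('a \<Rightarrow> 'a) \<Rightarrow> 'a set" where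
  "neg_roots \<Phi> s = {\<alpha> \<in> \<Phi>. s \<alpha> = - \<alpha>}"

definition star_roots :: "'a::euclidean_space set \<Rightarrow> ('a \<Rightarrow> 'a) \<Rightarrow> 'a set" where
  "star_roots \<Phi> s = \<Phi> - (fixed_roots \<Phi> s \<union> neg_roots \<Phi> s)"

definition regular_set :: "'a::euclidean_space set \<Rightarrow> 'a set" where
  "regular_set \<Phi> = {v. \<forall>\<alpha>\<in>\<Phi>. \<alpha> \<bullet> v \<noteq> 0}"

definition weyl_chamber :: "'a::euclidean_space set \<Rightarrow> 'a set \<Rightarrow> bool" where
  "weyl_chamber \<Phi> C \<longleftrightarrow> C \<in> components (regular_set \<Phi>)"

definition pos_roots :: "'a::euclidean_space set \<Rightarrow> 'a set \<Rightarrow> 'a set" where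
  "pos_roots \<Phi> C = {\<alpha> \<in> \<Phi>. \<forall>v\<in>C. \<alpha> \<bullet> v > 0}"

definition simple_roots :: "'a::euclidean_space set \<Rightarrow> 'a set \<Rightarrow> 'a set" where
  "simple_roots \<Phi> C = {\<alpha> \<in> pos_roots \<Phi> C.
      \<not> (\<exists>\<beta>\<in>pos_roots \<Phi> C. \<exists>\<gamma>\<in>pos_roots \<Phi> C. \<alpha> = \<beta> + \<gamma>)}"

definition S_chamber :: "'a::euclidean_space set \<Rightarrow> ('a \<Rightarrow> 'a) \<Rightarrow> 'a set \<Rightarrow> bool" where
  "S_chamber \<Phi> s C \<longleftrightarrow> weyl_chamber \<Phi> C \<and>
     (\<forall>\<alpha> \<in> pos_roots \<Phi> C \<inter> star_roots \<Phi> s. s \<alpha> \<in> pos_roots \<Phi> C)"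

end

theory Submission
  imports Defs
begin

text \<open>
  Existence: for any q, the vector p = q + s q is s-invariant, so \<open>s \<alpha> \<bullet> p = \<alpha> \<bullet> p\<close>, and
  \<open>\<alpha> \<bullet> p = (\<alpha> + s \<alpha>) \<bullet> q\<close> is nonzero on all of \<open>\<Phi>\<^sup>s\<^sub>\<star>\<close> for generic q. Any regular vector
  close enough to p has the same signs as p on these roots, so its chamber is an S-chamber.

  Equivalence: take a positive root \<alpha> \<in> \<open>\<Phi>\<^sup>s\<^sub>\<star>\<close> with s \<alpha> negative and of least height \<open>\<alpha> \<bullet> v\<close>
  (v in the chamber). If \<alpha> = \<beta> + \<gamma> with \<beta>, \<gamma> positive, then s \<alpha> negative forces exactly
  one summand, say \<beta>, to be negated by s, and then -s \<alpha> = \<beta> - s \<gamma> is a root of the same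
  kind and smaller height. So \<alpha> is simple.
\<close>

lemma reduced_root_system_uminus:
  assumes "reduced_root_system \<Phi>" "\<alpha> \<in> \<Phi>"
  shows "- \<alpha> \<in> \<Phi>"
proof -
  have "refl_vec \<alpha> \<alpha> = - \<alpha>"
    using assms by (auto simp: reduced_root_system_def refl_vec_def scaleR_2 algebra_simps)
  then show ?thesis
    using assms by (metis reduced_root_system_def)
qed

lemma regular_vector_in_open:
  fixes \<Phi> :: "'a::euclidean_space set"
  assumes "finite \<Phi>" "0 \<notin> \<Phi>" "open U" "p \<in> U"
  shows "\<exists>v\<in>U. v \<in> regular_set \<Phi>"
proof -
  obtain e where "e > 0" "ball p e \<subseteq> U"
    using assms(3,4) openE by blast
  have "\<not> negligible (ball p e)"
    using \<open>e > 0\<close> by (simp add: negligible_convex_interior)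
  moreover have "negligible (\<Union>\<alpha>\<in>\<Phi>. {v. \<alpha> \<bullet> v = 0})"
    using assms(1,2) by (intro negligible_Union) (auto intro: negligible_hyperplane)
  ultimately obtain v where "v \<in> ball p e" "v \<notin> (\<Union>\<alpha>\<in>\<Phi>. {v. \<alpha> \<bullet> v = 0})"
    by (meson negligible_subset subsetI)
  then show ?thesis
    using \<open>ball p e \<subseteq> U\<close> unfolding regular_set_def by blast
qed

lemma pos_roots_iff:
  assumes "C \<in> components (regular_set \<Phi>)" "v \<in> C" "\<beta> \<in> \<Phi>"
  shows "\<beta> \<in> pos_roots \<Phi> C \<longleftrightarrow> \<beta> \<bullet> v > 0"
proof
  assume "\<beta> \<bullet> v > 0"
  have "\<beta> \<bullet> u > 0" if u: "u \<in> C" for u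
  proof (rule ccontr)
    assume "\<not> \<beta> \<bullet> u > 0"
    then obtain z where "z \<in> C" "\<beta> \<bullet> z = 0"
      using connected_ivt_hyperplane[OF in_components_connected[OF assms(1)] u assms(2), of \<beta> 0]
        \<open>\<beta> \<bullet> v > 0\<close> by force
    then show False
      using in_components_subset[OF assms(1)] assms(3) by (auto simp: regular_set_def)
  qed
  then show "\<beta> \<in> pos_roots \<Phi> C"
    using assms(3) by (simp add: pos_roots_def)
qed (use assms(2) in \<open>simp add: pos_roots_def\<close>)

lemma not_pos_roots_iff:
  assumes "C \<in> components (regular_set \<Phi>)" "v \<in> C" "\<beta> \<in> \<Phi>"
  shows "\<beta> \<notin> pos_roots \<Phi> C \<longleftrightarrow> \<beta> \<bullet> v < 0"
proof -
  have "\<beta> \<bullet> v \<noteq> 0"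
    using in_components_subset[OF assms(1)] assms(2,3) by (auto simp: regular_set_def)
  then show ?thesis
    using pos_roots_iff[OF assms] by linarith
qed

lemma S_chamber_exists:
  fixes \<Phi> :: "'a::euclidean_space set"
  assumes "finite \<Phi>" "0 \<notin> \<Phi>" and orth: "orthogonal_transformation s"
    and inv: "\<And>x. s (s x) = x" and s_root: "\<And>\<alpha>. \<alpha> \<in> \<Phi> \<Longrightarrow> s \<alpha> \<in> \<Phi>"
  shows "\<exists>C. S_chamber \<Phi> s C"
proof -
  obtain q where q: "\<And>\<alpha>. \<alpha> \<in> \<Phi> \<Longrightarrow> \<alpha> + s \<alpha> \<noteq> 0 \<Longrightarrow> (\<alpha> + s \<alpha>) \<bullet> q \<noteq> 0"
  proof -
    have "finite ((\<lambda>\<alpha>. \<alpha> + s \<alpha>) ` \<Phi> - {0})"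
      using assms(1) by blast
    then obtain q where "q \<in> regular_set ((\<lambda>\<alpha>. \<alpha> + s \<alpha>) ` \<Phi> - {0})"
      using regular_vector_in_open[OF _ _ open_UNIV UNIV_I] by blast
    then show ?thesis
      using that unfolding regular_set_def by blast
  qed
  define p where "p = q + s q"
  have p: "\<alpha> \<bullet> p = (\<alpha> + s \<alpha>) \<bullet> q" for \<alpha>
  proof -
    have "s (s \<alpha>) \<bullet> s q = s \<alpha> \<bullet> q"
      using orth by (simp add: orthogonal_transformation_def)
    then have "\<alpha> \<bullet> s q = s \<alpha> \<bullet> q"
      by (simp add: inv)
    then show ?thesis
      by (simp add: p_def inner_add_left inner_add_right)
  qed
  have s_p: "s \<alpha> \<bullet> p = \<alpha> \<bullet> p" for \<alpha>
    by (simp add: p inv add.commute)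
  have star_p: "\<alpha> \<bullet> p \<noteq> 0" if "\<alpha> \<in> star_roots \<Phi> s" for \<alpha>
  proof -
    have "\<alpha> + s \<alpha> \<noteq> 0"
      using that by (auto simp: star_roots_def neg_roots_def add_eq_0_iff)
    then show ?thesis
      using that q p by (auto simp: star_roots_def)
  qed
  define U where "U = (\<Inter>\<alpha>\<in>{\<alpha>\<in>\<Phi>. \<alpha> \<bullet> p \<noteq> 0}. {v. ((\<alpha> \<bullet> p) *\<^sub>R \<alpha>) \<bullet> v > 0})"
  have "open U"
    unfolding U_def by (intro open_INT ballI open_halfspace_gt) (use assms(1) in simp)
  moreover have "p \<in> U"
    by (auto simp: U_def zero_less_mult_iff linorder_neq_iff)
  ultimately obtain v where "v \<in> U" and v_reg: "v \<in> regular_set \<Phi>"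
    using regular_vector_in_open[OF assms(1,2)] by blast
  have same_sign: "0 < (\<alpha> \<bullet> p) * (\<alpha> \<bullet> v)" if "\<alpha> \<in> \<Phi>" "\<alpha> \<bullet> p \<noteq> 0" for \<alpha>
    using \<open>v \<in> U\<close> that by (auto simp: U_def)
  define C where "C = connected_component_set (regular_set \<Phi>) v"
  have C: "C \<in> components (regular_set \<Phi>)" "v \<in> C"
    using v_reg by (auto simp: C_def componentsI)
  have "s \<alpha> \<in> pos_roots \<Phi> C" if "\<alpha> \<in> pos_roots \<Phi> C \<inter> star_roots \<Phi> s" for \<alpha>
  proof -
    have "\<alpha> \<in> \<Phi>" "\<alpha> \<bullet> v > 0"
      using that C(2) by (auto simp: pos_roots_def)
    moreover have "\<alpha> \<bullet> p \<noteq> 0"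
      using star_p that by blast
    ultimately have "\<alpha> \<bullet> p > 0"
      using same_sign[of \<alpha>] by (simp add: zero_less_mult_iff)
    then have "s \<alpha> \<bullet> v > 0"
      using same_sign[of "s \<alpha>"] s_p s_root \<open>\<alpha> \<in> \<Phi>\<close> by (auto simp: zero_less_mult_iff)
    then show ?thesis
      using pos_roots_iff[OF C s_root] \<open>\<alpha> \<in> \<Phi>\<close> by blast
  qed
  then show ?thesis
    using C by (auto simp: S_chamber_def weyl_chamber_def)
qed

lemma least_unpreserved_star_root_simple:
  fixes \<Phi> :: "'a::euclidean_space set"
  assumes C: "C \<in> components (regular_set \<Phi>)" "v \<in> C"
    and uminus: "\<And>\<alpha>. \<alpha> \<in> \<Phi> \<Longrightarrow> - \<alpha> \<in> \<Phi>"
    and lin: "linear s" and inv: "\<And>x. s (s x) = x" and s_root: "\<And>\<alpha>. \<alpha> \<in> \<Phi> \<Longrightarrow> s \<alpha> \<in> \<Phi>"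
    and \<alpha>: "\<alpha> \<in> pos_roots \<Phi> C \<inter> star_roots \<Phi> s" "s \<alpha> \<notin> pos_roots \<Phi> C"
    and least: "\<And>x. x \<in> pos_roots \<Phi> C \<inter> star_roots \<Phi> s \<Longrightarrow> s x \<notin> pos_roots \<Phi> C \<Longrightarrow>
                  \<alpha> \<bullet> v \<le> x \<bullet> v"
  shows "\<alpha> \<in> simple_roots \<Phi> C"
proof -
  have pos: "x \<in> \<Phi> \<and> x \<bullet> v > 0" if "x \<in> pos_roots \<Phi> C" for x
    using that C(2) by (auto simp: pos_roots_def)
  have \<alpha>_root: "\<alpha> \<in> \<Phi>" "s \<alpha> \<noteq> \<alpha>" "s \<alpha> \<noteq> - \<alpha>" and s\<alpha>_neg: "s \<alpha> \<bullet> v < 0"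
    using \<alpha> not_pos_roots_iff[OF C s_root]
    by (auto simp: star_roots_def fixed_roots_def neg_roots_def)
  have below: "s x \<in> pos_roots \<Phi> C"
    if "x \<in> pos_roots \<Phi> C" "x \<bullet> v < \<alpha> \<bullet> v" "s x \<noteq> - x" for x
    using that least[of x] pos[of x]
    by (cases "s x = x") (auto simp: star_roots_def fixed_roots_def neg_roots_def)
  have mixed: False
    if \<beta>: "\<beta> \<in> pos_roots \<Phi> C" "s \<beta> = - \<beta>" and \<gamma>: "\<gamma> \<in> pos_roots \<Phi> C" "s \<gamma> \<noteq> - \<gamma>"
      and sum: "\<alpha> = \<beta> + \<gamma>" for \<beta> \<gamma>
  proof -
    have "s \<gamma> \<bullet> v > 0"
      using below[OF \<gamma>(1) _ \<gamma>(2)] pos[OF \<beta>(1)] pos[OF \<gamma>(1)] pos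
      by (simp add: sum inner_add_left)
    define \<alpha>' where "\<alpha>' = - s \<alpha>"
    have "\<alpha>' = \<beta> - s \<gamma>"
      using \<beta>(2) by (simp add: \<alpha>'_def sum linear_add[OF lin])
    have s\<alpha>': "s \<alpha>' = - \<alpha>"
      using inv by (simp add: \<alpha>'_def linear_neg[OF lin])
    have "\<alpha>' \<in> pos_roots \<Phi> C \<inter> star_roots \<Phi> s"
      using \<alpha>_root s\<alpha>_neg s\<alpha>' uminus s_root pos_roots_iff[OF C]
      by (auto simp: \<alpha>'_def star_roots_def fixed_roots_def neg_roots_def)
    moreover have "s \<alpha>' \<notin> pos_roots \<Phi> C"
      using s\<alpha>' pos[of "- \<alpha>"] pos[OF \<alpha>(1)[THEN IntD1]] by auto
    ultimately have "\<alpha> \<bullet> v \<le> \<alpha>' \<bullet> v"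
      by (rule least)
    then show False
      using \<open>\<alpha>' = \<beta> - s \<gamma>\<close> \<open>s \<gamma> \<bullet> v > 0\<close> pos[OF \<gamma>(1)]
      by (simp add: sum inner_add_left inner_diff_left)
  qed
  have False if \<beta>: "\<beta> \<in> pos_roots \<Phi> C" and \<gamma>: "\<gamma> \<in> pos_roots \<Phi> C" and sum: "\<alpha> = \<beta> + \<gamma>" for \<beta> \<gamma>
  proof (cases "s \<beta> = - \<beta>"; cases "s \<gamma> = - \<gamma>")
    assume "s \<beta> = - \<beta>" "s \<gamma> = - \<gamma>"
    then show False
      using \<alpha>_root(3) by (simp add: sum linear_add[OF lin])
  next
    assume "s \<beta> = - \<beta>" "s \<gamma> \<noteq> - \<gamma>"
    then show False
      using mixed \<beta> \<gamma> sum by blast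
  next
    assume "s \<beta> \<noteq> - \<beta>" "s \<gamma> = - \<gamma>"
    then show False
      using mixed \<beta> \<gamma> sum by (metis add.commute)
  next
    assume "s \<beta> \<noteq> - \<beta>" "s \<gamma> \<noteq> - \<gamma>"
    then have "s \<beta> \<bullet> v > 0" "s \<gamma> \<bullet> v > 0"
      using below \<beta> \<gamma> pos by (simp_all add: sum inner_add_left)
    then show False
      using s\<alpha>_neg by (simp add: sum linear_add[OF lin] inner_add_left)
  qed
  then show ?thesis
    using \<alpha> by (auto simp: simple_roots_def)
qed

lemma S_chamber_iff_simple_roots:
  fixes \<Phi> :: "'a::euclidean_space set"
  assumes C: "weyl_chamber \<Phi> C" and "finite \<Phi>"
    and uminus: "\<And>\<alpha>. \<alpha> \<in> \<Phi> \<Longrightarrow> - \<alpha> \<in> \<Phi>"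
    and lin: "linear s" and inv: "\<And>x. s (s x) = x" and s_root: "\<And>\<alpha>. \<alpha> \<in> \<Phi> \<Longrightarrow> s \<alpha> \<in> \<Phi>"
  shows "S_chamber \<Phi> s C \<longleftrightarrow>
           (\<forall>\<alpha> \<in> simple_roots \<Phi> C \<inter> star_roots \<Phi> s. s \<alpha> \<in> pos_roots \<Phi> C)"
proof
  assume "S_chamber \<Phi> s C"
  then show "\<forall>\<alpha> \<in> simple_roots \<Phi> C \<inter> star_roots \<Phi> s. s \<alpha> \<in> pos_roots \<Phi> C"
    by (auto simp: S_chamber_def simple_roots_def)
next
  assume simple: "\<forall>\<alpha> \<in> simple_roots \<Phi> C \<inter> star_roots \<Phi> s. s \<alpha> \<in> pos_roots \<Phi> C"
  have C_comp: "C \<in> components (regular_set \<Phi>)"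
    using C by (simp add: weyl_chamber_def)
  then obtain v where "v \<in> C"
    using in_components_nonempty by blast
  define bad where "bad = {\<alpha> \<in> pos_roots \<Phi> C \<inter> star_roots \<Phi> s. s \<alpha> \<notin> pos_roots \<Phi> C}"
  have "bad = {}"
  proof (rule ccontr)
    assume "bad \<noteq> {}"
    moreover have "finite bad"
      using \<open>finite \<Phi>\<close> by (rule finite_subset[rotated]) (auto simp: bad_def pos_roots_def)
    ultimately obtain \<alpha> where "\<alpha> \<in> bad" and least: "\<not> (\<exists>x\<in>bad. x \<bullet> v < \<alpha> \<bullet> v)"
      using arg_min_if_finite[of bad "\<lambda>x. x \<bullet> v"] by blast
    then have "\<alpha> \<in> simple_roots \<Phi> C"
      by (intro least_unpreserved_star_root_simple[OF C_comp \<open>v \<in> C\<close> uminus lin inv s_root])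
        (auto simp: bad_def not_less)
    then show False
      using simple \<open>\<alpha> \<in> bad\<close> by (auto simp: bad_def)
  qed
  then show "S_chamber \<Phi> s C"
    using C by (auto simp: S_chamber_def bad_def)
qed

theorem theorem3p10:
  fixes \<Phi> :: "'a::euclidean_space set" and s :: "'a \<Rightarrow> 'a"
  assumes "reduced_root_system \<Phi>" and "s \<in> root_involutions \<Phi>"
  shows "(\<exists>C. S_chamber \<Phi> s C) \<and>
         (\<forall>C. weyl_chamber \<Phi> C \<longrightarrow>
            (S_chamber \<Phi> s C \<longleftrightarrow>
             (\<forall>\<alpha> \<in> simple_roots \<Phi> C \<inter> star_roots \<Phi> s. s \<alpha> \<in> pos_roots \<Phi> C)))"
proof -
  have "finite \<Phi>" "0 \<notin> \<Phi>"
    using assms(1) by (auto simp: reduced_root_system_def)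
  have orth: "orthogonal_transformation s" and inv: "\<And>x. s (s x) = x"
    and s_root: "\<And>\<alpha>. \<alpha> \<in> \<Phi> \<Longrightarrow> s \<alpha> \<in> \<Phi>"
    using assms(2) by (auto simp: root_involutions_def root_automorphisms_def fun_eq_iff)
  have "linear s"
    using orth by (simp add: orthogonal_transformation_def)
  show ?thesis
    using S_chamber_exists[OF \<open>finite \<Phi>\<close> \<open>0 \<notin> \<Phi>\<close> orth inv s_root]
      S_chamber_iff_simple_roots[OF _ \<open>finite \<Phi>\<close> reduced_root_system_uminus[OF assms(1)]
        \<open>linear s\<close> inv s_root]
    by blast
qed

end
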